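(* Let $\epsilon:B\to A$ be a local augmentation. (a) If $\alpha,\beta$ are invertible $n\times n$ matrices over $B$ with $\epsilon(\alpha)=\epsilon(\beta)$ the identity matrix, then $D(\alpha\beta)=D(\alpha)D(\beta)$ in $\epsilon^{-1}(1)/C_0$. (b) If $\alpha$ is an $m\times n$ matrix and $\beta$ an $n\times m$ matrix over $B$ (i.e. $\alpha:B^n\to B^m$, $\beta:B^m\to B^n$) and $\epsilon(\alpha)=0$ or $\epsilon(\beta)=0$ (or both), then $D(1+\alpha\beta)=D(1+\beta\alpha)$ in $\epsilon^{-1}(1)/C_0$.
   Context: Rings are associative with $1$. A local augmentation is a ring homomorphism $\epsilon:B\to A$ with a ring homomorphism $j:A\to B$, $\epsilon j=\mathrm{id}_A$, such that every square matrix over $B$ whose image under $\epsilon$ is invertible is itself invertible; $\epsilon$ is applied to matrices entrywise. Under the hypothesis of (b), $1+\alpha\beta$ and $1+\beta\alpha$ are invertible with $\epsilon$-image the identity. $C_0$ is the subgroup of units of $B$ generated by $\{(1+ab)(1+ba)^{-1}\mid a,b\in B,\ \epsilon(a)=0\}$; it is a normal subgroup of $\epsilon^{-1}(1)$ with abelian quotient. For an invertible $k\times k$ matrix $\gamma$ over $B$ with $\epsilon(\gamma)$ the identity, $D(\gamma)\in\epsilon^{-1}(1)/C_0$ is defined recursively: if $k=1$, $D(\gamma)$ is the class of $\gamma$; if $k\ge2$, write $\gamma=\begin{pmatrix}\gamma_{11}&\gamma_{12}\\ \gamma_{21}&\gamma_{22}\end{pmatrix}$ with $\gamma_{11}$ of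 size $1\times1$ (invertible since $\epsilon(\gamma_{11})=1$) and set $D(\gamma)=\gamma_{11}D(\gamma_{22}-\gamma_{21}\gamma_{11}^{-1}\gamma_{12})$. *)

theory Defs
  imports "Jordan_Normal_Form.Matrix"
begin

definition uinv :: "'b::ring_1 \<Rightarrow> 'b" where
  "uinv u = (THE v. u * v = 1 \<and> v * u = 1)"

definition is_ring_hom :: "('b::ring_1 \<Rightarrow> 'a::ring_1) \<Rightarrow> bool" where
  "is_ring_hom f \<longleftrightarrow> (\<forall>x y. f (x + y) = f x + f y) \<and> (\<forall>x y. f (x * y) = f x * f y) \<and> f 1 = 1"

definition local_augmentation :: "('b::ring_1 \<Rightarrow> 'a::ring_1) \<Rightarrow> ('a \<Rightarrow> 'b) \<Rightarrow> bool" where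
  "local_augmentation eps j \<longleftrightarrow> is_ring_hom eps \<and> is_ring_hom j \<and> (\<forall>x. eps (j x) = x) \<and>
     (\<forall>k (M :: 'b mat). M \<in> carrier_mat k k \<longrightarrow> invertible_mat (map_mat eps M) \<longrightarrow> invertible_mat M)"

inductive_set C0 :: "('b::ring_1 \<Rightarrow> 'a::ring_1) \<Rightarrow> 'b set" for eps where
  one: "1 \<in> C0 eps"
| gen: "eps a = 0 \<Longrightarrow> (1 + a * b) * uinv (1 + b * a) \<in> C0 eps"
| mult: "x \<in> C0 eps \<Longrightarrow> y \<in> C0 eps \<Longrightarrow> x * y \<in> C0 eps"
| inv: "x \<in> C0 eps \<Longrightarrow> uinv x \<in> C0 eps"

text \<open>Equality of classes in eps^{-1}(1)/C_0 of two elements of eps^{-1}(1).\<close>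
definition eqC0 :: "('b::ring_1 \<Rightarrow> 'a::ring_1) \<Rightarrow> 'b \<Rightarrow> 'b \<Rightarrow> bool" where
  "eqC0 eps x y \<longleftrightarrow> x * uinv y \<in> C0 eps"

definition schur1 :: "'b::ring_1 mat \<Rightarrow> 'b mat" where
  "schur1 g = mat (dim_row g - 1) (dim_col g - 1)
     (\<lambda>(i, k). g $$ (i + 1, k + 1) - g $$ (i + 1, 0) * uinv (g $$ (0, 0)) * g $$ (0, k + 1))"

text \<open>A representative in B of D(g); D(g) itself is its class modulo C_0.
  Convention: the empty (0x0) matrix gets 1, so for k = 1 the value is g 0 0.\<close>
function Drep :: "'b::ring_1 mat \<Rightarrow> 'b" where
  "Drep g = (if dim_row g = 0 then 1 else g $$ (0, 0) * Drep (schur1 g))"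
  by auto
termination
  by (relation "measure dim_row") (auto simp: schur1_def)

end

theory Submission
  imports Defs
begin

(* Only two consequences of locality are used: eps is a ring homomorphism, and every x with
   eps x = 1 is a unit. Commutators of such units lie in C0, so eps^-1(1)/C0 is abelian.
   D is computed from the pivot in the top left corner and does not change under elementary
   operations with that pivot. Factoring alpha and beta into such elementary matrices and block
   triangular ones gives D(alpha beta) = p D(S_alpha M S_beta), where p is the pivot of
   alpha beta, S_alpha and S_beta are the Schur complements of the pivots of alpha and beta,
   and M = 1 - s' p^-1 r is a rank one perturbation of 1 (r is the rest of the first row of
   alpha, s' the rest of the first column of beta). Together with the rank one case
   D(1 + l u) = 1 + u l of (b), this proves (a) by induction on n.
   For (b), let a be the first column of alpha and b the first row of beta. Then
   1 + alpha beta = (1 + a b)(1 + T alpha' beta') with T = (1 + a b)^-1, while 1 + beta alpha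
   has pivot 1 + b a and Schur complement 1 + beta' T alpha'. Now (a), the rank one case and
   induction on n finish the proof. *)

lemma uinv_eqI:
  fixes x :: "'b::ring_1"
  assumes "x * y = 1" and "y * x = 1"
  shows "uinv x = y"
  unfolding uinv_def
proof (rule the_equality)
  fix v assume v: "x * v = 1 \<and> v * x = 1"
  have "v = v * (x * y)" using assms by simp
  also have "\<dots> = y" using v by (simp add: mult.assoc[symmetric])
  finally show "v = y" .
qed (use assms in simp)

lemma uinv_one_plus_swap:
  fixes x y c :: "'b::ring_1"
  assumes "(1 + x * y) * c = 1" and "c * (1 + x * y) = 1"
  shows "uinv (1 + y * x) = 1 - y * c * x"
proof (rule uinv_eqI)
  have "(1 + y * x) * (1 - y * c * x) = 1 + y * x - y * ((1 + x * y) * c) * x"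
    by (simp add: algebra_simps)
  then show "(1 + y * x) * (1 - y * c * x) = 1" using assms by simp
  have "(1 - y * c * x) * (1 + y * x) = 1 + y * x - y * (c * (1 + x * y)) * x"
    by (simp add: algebra_simps)
  then show "(1 - y * c * x) * (1 + y * x) = 1" using assms by simp
qed

section \<open>Block matrices\<close>

definition mat11 :: "'b \<Rightarrow> 'b mat" where
  "mat11 x = mat 1 1 (\<lambda>_. x)"

lemma mat11_carrier_iff [simp]: "mat11 x \<in> carrier_mat n m \<longleftrightarrow> n = 1 \<and> m = 1"
  by (auto simp: mat11_def)

lemma dim_row_mat11 [simp]: "dim_row (mat11 x) = 1"
  and dim_col_mat11 [simp]: "dim_col (mat11 x) = 1"
  and index_mat11 [simp]: "i < 1 \<Longrightarrow> j < 1 \<Longrightarrow> mat11 x $$ (i, j) = x"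
  by (simp_all add: mat11_def)

text \<open>Entries of a product are unfolded only when the inner dimension is 1; larger products are
  rearranged with the following variants of the library laws, whose side conditions on
  dimensions the simplifier can discharge.\<close>

declare index_mult_mat(1) [simp del]

lemma index_mult_mat_inner_dim_1 [simp]:
  "dim_col A = 1 \<Longrightarrow> dim_row B = 1 \<Longrightarrow> i < dim_row A \<Longrightarrow> j < dim_col B \<Longrightarrow>
    (A * B) $$ (i, j) = A $$ (i, 0) * B $$ (0, j)"
  by (simp add: index_mult_mat(1) scalar_prod_def)

lemma index_mult_mat_sum:
  "i < dim_row A \<Longrightarrow> j < dim_col B \<Longrightarrow> dim_col A = dim_row B \<Longrightarrow>
    (A * B) $$ (i, j) = (\<Sum>l<dim_col A. A $$ (i, l) * B $$ (l, j))"
  by (simp add: index_mult_mat(1) scalar_prod_def lessThan_atLeast0)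

lemma mult_mat_assoc_dim:
  fixes A :: "'a::semiring_0 mat"
  assumes "dim_col A = dim_row B" and "dim_col B = dim_row C"
  shows "A * B * C = A * (B * C)"
  using assms
  by (intro assoc_mult_mat[of _ "dim_row A" "dim_col A" _ "dim_col B" _ "dim_col C"]) auto

lemma mult_add_distrib_dim:
  fixes A :: "'a::semiring_0 mat"
  assumes "dim_col A = dim_row B" "dim_row C = dim_row B" "dim_col C = dim_col B"
  shows "A * (B + C) = A * B + A * C"
  using assms by (intro mult_add_distrib_mat[of _ "dim_row A" "dim_col A" _ "dim_col B"]) auto

lemma add_mult_distrib_dim:
  fixes A :: "'a::semiring_0 mat"
  assumes "dim_row B = dim_row A" "dim_col B = dim_col A" "dim_row C = dim_col A"
  shows "(A + B) * C = A * C + B * C"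
  using assms by (intro add_mult_distrib_mat[of _ "dim_row A" "dim_col A"]) auto

lemma mult_minus_distrib_dim:
  fixes A :: "'a::ring mat"
  assumes "dim_col A = dim_row B" "dim_row C = dim_row B" "dim_col C = dim_col B"
  shows "A * (B - C) = A * B - A * C"
  using assms by (intro mult_minus_distrib_mat[of _ "dim_row A" "dim_col A" _ "dim_col B"]) auto

lemma minus_mult_distrib_dim:
  fixes A :: "'a::ring mat"
  assumes "dim_row B = dim_row A" "dim_col B = dim_col A" "dim_row C = dim_col A"
  shows "(A - B) * C = A * C - B * C"
  using assms by (intro minus_mult_distrib_mat[of _ "dim_row A" "dim_col A"]) auto

definition first_col :: "'a mat \<Rightarrow> 'a mat" where
  "first_col A = mat (dim_row A) 1 (\<lambda>(i, _). A $$ (i, 0))"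

definition other_cols :: "'a mat \<Rightarrow> 'a mat" where
  "other_cols A = mat (dim_row A) (dim_col A - 1) (\<lambda>(i, j). A $$ (i, Suc j))"

definition first_row :: "'a mat \<Rightarrow> 'a mat" where
  "first_row A = mat 1 (dim_col A) (\<lambda>(_, j). A $$ (0, j))"

definition other_rows :: "'a mat \<Rightarrow> 'a mat" where
  "other_rows A = mat (dim_row A - 1) (dim_col A) (\<lambda>(i, j). A $$ (Suc i, j))"

lemma dim_first_col [simp]: "dim_row (first_col A) = dim_row A" "dim_col (first_col A) = 1"
  and dim_other_cols [simp]:
    "dim_row (other_cols A) = dim_row A" "dim_col (other_cols A) = dim_col A - 1"
  and dim_first_row [simp]: "dim_row (first_row A) = 1" "dim_col (first_row A) = dim_col A"
  and dim_other_rows [simp]: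
    "dim_row (other_rows A) = dim_row A - 1" "dim_col (other_rows A) = dim_col A"
  by (simp_all add: first_col_def other_cols_def first_row_def other_rows_def)

lemma index_first_col [simp]: "i < dim_row A \<Longrightarrow> j < 1 \<Longrightarrow> first_col A $$ (i, j) = A $$ (i, 0)"
  and index_other_cols [simp]:
    "i < dim_row A \<Longrightarrow> j < dim_col A - 1 \<Longrightarrow> other_cols A $$ (i, j) = A $$ (i, Suc j)"
  and index_first_row [simp]: "i < 1 \<Longrightarrow> j < dim_col A \<Longrightarrow> first_row A $$ (i, j) = A $$ (0, j)"
  and index_other_rows [simp]:
    "i < dim_row A - 1 \<Longrightarrow> j < dim_col A \<Longrightarrow> other_rows A $$ (i, j) = A $$ (Suc i, j)"
  by (simp_all add: first_col_def other_cols_def first_row_def other_rows_def)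

lemma mult_split_first_col:
  assumes "dim_col A = Suc n" and "dim_row B = Suc n"
  shows "A * B = first_col A * first_row B + other_cols A * other_rows B"
  using assms by (intro eq_matI)
    (simp_all add: index_mult_mat_sum sum.lessThan_Suc_shift del: sum.lessThan_Suc)

lemma four_block_mat_split:
  assumes "g \<in> carrier_mat (Suc m) (Suc n)"
  obtains a r s A where "r \<in> carrier_mat 1 n" "s \<in> carrier_mat m 1" "A \<in> carrier_mat m n"
    and "g = four_block_mat (mat11 a) r s A"
proof
  show "g = four_block_mat (mat11 (g $$ (0, 0))) (mat 1 n (\<lambda>(_, j). g $$ (0, Suc j)))
      (mat m 1 (\<lambda>(i, _). g $$ (Suc i, 0))) (mat m n (\<lambda>(i, j). g $$ (Suc i, Suc j)))"
    using assms by (intro eq_matI) auto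
qed auto

lemma map_mat_eq_zero_iff:
  "A \<in> carrier_mat n m \<Longrightarrow> map_mat f A = 0\<^sub>m n m \<longleftrightarrow> (\<forall>i<n. \<forall>j<m. f (A $$ (i, j)) = 0)"
  by (auto simp: mat_eq_iff)

lemma map_mat_eq_one_iff:
  "A \<in> carrier_mat n n \<Longrightarrow>
    map_mat f A = 1\<^sub>m n \<longleftrightarrow> (\<forall>i<n. \<forall>j<n. f (A $$ (i, j)) = (if i = j then 1 else 0))"
  by (auto simp: mat_eq_iff)

lemma one_plus_rank_one_inverse:
  fixes a :: "'a::ring_1 mat"
  assumes c: "a \<in> carrier_mat m 1" "b \<in> carrier_mat 1 m"
    and inv: "(1 + (b * a) $$ (0, 0)) * d = 1"
  shows "(1\<^sub>m m + a * b) * (1\<^sub>m m - a * mat11 d * b) = 1\<^sub>m m"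
proof -
  define t where "t = (b * a) $$ (0, 0)"
  have ba: "b * (a * Y) = mat11 t * Y" if "dim_row Y = 1" for Y
  proof -
    have "b * a = mat11 t" using c by (intro eq_matI) (auto simp: t_def)
    then show ?thesis using c that by (simp flip: mult_mat_assoc_dim)
  qed
  have td: "t * (d * x) = x - d * x" for x
  proof -
    have "t * (d * x) = ((1 + t) * d - d) * x" by (simp add: algebra_simps)
    also have "\<dots> = x - d * x" using inv by (simp add: t_def algebra_simps)
    finally show ?thesis .
  qed
  show ?thesis
    using c by (simp add: mult_minus_distrib_dim minus_mult_distrib_dim add_mult_distrib_dim
        mult_mat_assoc_dim ba) (intro eq_matI; simp add: td right_diff_distrib)
qed

lemma one_plus_mult_factor:
  fixes A :: "'a::ring_1 mat"
  assumes A: "A \<in> carrier_mat m (Suc n)" and B: "B \<in> carrier_mat (Suc n) m"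
  defines "t \<equiv> (first_row B * first_col A) $$ (0, 0)"
  assumes inv: "(1 + t) * uinv (1 + t) = 1"
  shows "1\<^sub>m m + A * B = (1\<^sub>m m + first_col A * first_row B) *
    (1\<^sub>m m + (1\<^sub>m m - first_col A * mat11 (uinv (1 + t)) * first_row B) *
      other_cols A * other_rows B)"
proof -
  let ?P = "1\<^sub>m m + first_col A * first_row B"
  let ?T = "1\<^sub>m m - first_col A * mat11 (uinv (1 + t)) * first_row B"
  have c: "first_col A \<in> carrier_mat m 1" "first_row B \<in> carrier_mat 1 m"
    "other_cols A \<in> carrier_mat m n" "other_rows B \<in> carrier_mat n m" "?T \<in> carrier_mat m m"
    using A B by auto
  have "?P * ?T = 1\<^sub>m m"
    by (rule one_plus_rank_one_inverse[OF c(1,2)]) (use inv in \<open>simp only: t_def\<close>)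
  moreover have "?P * (?T * other_cols A * other_rows B) = (?P * ?T) * other_cols A * other_rows B"
    using A B c by (simp add: mult_mat_assoc_dim)
  ultimately have "?P * (?T * other_cols A * other_rows B) = other_cols A * other_rows B"
    using A by simp
  moreover have "?P * (1\<^sub>m m + ?T * other_cols A * other_rows B) =
      ?P * 1\<^sub>m m + ?P * (?T * other_cols A * other_rows B)"
    using c by (intro mult_add_distrib_dim) auto
  ultimately show ?thesis
    using A B c mult_split_first_col[of A n B] by (simp add: assoc_add_mat[of _ m m])
qed

section \<open>The recursion defining D\<close>

declare Drep.simps [simp del]

lemma Drep_empty: "dim_row g = 0 \<Longrightarrow> Drep g = 1"
  by (simp add: Drep.simps)

lemma Drep_four_block:
  assumes "r \<in> carrier_mat 1 l" and "s \<in> carrier_mat k 1" and "A \<in> carrier_mat k l"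
  shows "Drep (four_block_mat (mat11 a) r s A) = a * Drep (A - s * mat11 (uinv a) * r)"
proof -
  have "schur1 (four_block_mat (mat11 a) r s A) = A - s * mat11 (uinv a) * r"
    using assms unfolding schur1_def by (intro eq_matI) (auto simp: mult.assoc)
  then show ?thesis by (subst Drep.simps) simp
qed

lemma Drep_one_mat [simp]: "Drep (1\<^sub>m n :: 'a::ring_1 mat) = 1"
proof (induction n)
  case (Suc n)
  have "schur1 (1\<^sub>m (Suc n)) = (1\<^sub>m n :: 'a mat)" unfolding schur1_def by (intro eq_matI) auto
  with Suc show ?case by (subst Drep.simps) simp
qed (simp add: Drep_empty)

lemma four_block_lower_factor:
  assumes a: "uinv a * a = 1"
    and c: "r \<in> carrier_mat 1 l" "s \<in> carrier_mat k 1" "A \<in> carrier_mat k l"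
  shows "four_block_mat (mat11 a) r s A =
    four_block_mat (mat11 1) (0\<^sub>m 1 k) (s * mat11 (uinv a)) (1\<^sub>m k) *
    four_block_mat (mat11 a) r (0\<^sub>m k 1) (A - s * mat11 (uinv a) * r)"
  using c by (subst mult_four_block_mat[of _ 1 1 _ k _ k _ _ 1 _ l])
    (auto intro!: cong_four_block_mat eq_matI simp: mult.assoc a)

lemma four_block_upper_factor:
  assumes b: "b * uinv b = 1"
    and c: "r \<in> carrier_mat 1 k" "s \<in> carrier_mat l 1" "B \<in> carrier_mat l k"
  shows "four_block_mat (mat11 b) r s B =
    four_block_mat (mat11 b) (0\<^sub>m 1 k) s (B - s * mat11 (uinv b) * r) *
    four_block_mat (mat11 1) (mat11 (uinv b) * r) (0\<^sub>m k 1) (1\<^sub>m k)"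
  using c by (subst mult_four_block_mat[of _ 1 1 _ k _ l _ _ 1 _ k])
    (auto intro!: cong_four_block_mat eq_matI simp: b simp flip: mult.assoc)

lemma Drep_lower_mult_upper:
  assumes y: "y * uinv y = 1" "uinv y * y = 1"
    and c: "l \<in> carrier_mat k 1" "u \<in> carrier_mat 1 k"
      "r \<in> carrier_mat 1 k" "s \<in> carrier_mat k 1" "A \<in> carrier_mat k k"
  shows "Drep (four_block_mat (mat11 1) (0\<^sub>m 1 k) l (1\<^sub>m k) * four_block_mat (mat11 y) r s A *
      four_block_mat (mat11 1) u (0\<^sub>m k 1) (1\<^sub>m k)) = Drep (four_block_mat (mat11 y) r s A)"
proof -
  have "four_block_mat (mat11 1) (0\<^sub>m 1 k) l (1\<^sub>m k) * four_block_mat (mat11 y) r s A *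
      four_block_mat (mat11 1) u (0\<^sub>m k 1) (1\<^sub>m k) =
    four_block_mat (mat11 y) (mat11 y * u + r) (l * mat11 y + s)
      (l * mat11 y * u + l * r + s * u + A)"
    using c by (simp add: mult_four_block_mat[of _ 1 1 _ k _ k _ _ 1 _ k])
      (auto intro!: cong_four_block_mat eq_matI simp: algebra_simps)
  also have "Drep \<dots> = y * Drep (l * mat11 y * u + l * r + s * u + A -
      (l * mat11 y + s) * mat11 (uinv y) * (mat11 y * u + r))"
    using c by (intro Drep_four_block) auto
  also have "l * mat11 y * u + l * r + s * u + A -
      (l * mat11 y + s) * mat11 (uinv y) * (mat11 y * u + r) = A - s * mat11 (uinv y) * r"
  proof -
    have y': "y * (uinv y * x) = x" "uinv y * (y * x) = x" for x
      using y by (simp_all flip: mult.assoc)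
    show ?thesis using c by (intro eq_matI) (auto simp: algebra_simps y')
  qed
  also have "y * Drep \<dots> = Drep (four_block_mat (mat11 y) r s A)"
    using c by (intro Drep_four_block[symmetric])
  finally show ?thesis .
qed

lemma Drep_four_block_mult:
  fixes a b :: "'a::ring_1"
  assumes c: "r \<in> carrier_mat 1 k" "s \<in> carrier_mat k 1" "A \<in> carrier_mat k k"
      "r' \<in> carrier_mat 1 k" "s' \<in> carrier_mat k 1" "B \<in> carrier_mat k k"
  defines "p \<equiv> a * b + (r * s') $$ (0, 0)"
  assumes units: "uinv a * a = 1" "b * uinv b = 1" "p * uinv p = 1" "uinv p * p = 1"
  shows "Drep (four_block_mat (mat11 a) r s A * four_block_mat (mat11 b) r' s' B) =
    p * Drep ((A - s * mat11 (uinv a) * r) * (1\<^sub>m k - s' * mat11 (uinv p) * r) *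
      (B - s' * mat11 (uinv b) * r'))"
proof -
  define Sa Sb where "Sa = A - s * mat11 (uinv a) * r" and "Sb = B - s' * mat11 (uinv b) * r'"
  have cS: "Sa \<in> carrier_mat k k" "Sb \<in> carrier_mat k k" using c by (auto simp: Sa_def Sb_def)
  have YZ: "four_block_mat (mat11 a) r (0\<^sub>m k 1) Sa * four_block_mat (mat11 b) (0\<^sub>m 1 k) s' Sb =
      four_block_mat (mat11 p) (r * Sb) (Sa * s') (Sa * Sb)"
    using c cS by (subst mult_four_block_mat[of _ 1 1 _ k _ k _ _ 1 _ k])
      (auto intro!: cong_four_block_mat eq_matI simp: p_def)
  have L: "four_block_mat (mat11 a) r s A =
      four_block_mat (mat11 1) (0\<^sub>m 1 k) (s * mat11 (uinv a)) (1\<^sub>m k) *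
      four_block_mat (mat11 a) r (0\<^sub>m k 1) Sa"
    unfolding Sa_def using c units by (intro four_block_lower_factor)
  have U: "four_block_mat (mat11 b) r' s' B = four_block_mat (mat11 b) (0\<^sub>m 1 k) s' Sb *
      four_block_mat (mat11 1) (mat11 (uinv b) * r') (0\<^sub>m k 1) (1\<^sub>m k)"
    unfolding Sb_def using c units by (intro four_block_upper_factor)
  have "four_block_mat (mat11 a) r s A * four_block_mat (mat11 b) r' s' B =
      four_block_mat (mat11 1) (0\<^sub>m 1 k) (s * mat11 (uinv a)) (1\<^sub>m k) *
      four_block_mat (mat11 p) (r * Sb) (Sa * s') (Sa * Sb) *
      four_block_mat (mat11 1) (mat11 (uinv b) * r') (0\<^sub>m k 1) (1\<^sub>m k)"
    using c cS by (simp add: L U mult_mat_assoc_dim flip: YZ)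
  also have "Drep \<dots> = Drep (four_block_mat (mat11 p) (r * Sb) (Sa * s') (Sa * Sb))"
    using c cS units by (intro Drep_lower_mult_upper) auto
  also have "\<dots> = p * Drep (Sa * Sb - Sa * s' * mat11 (uinv p) * (r * Sb))"
    using c cS by (intro Drep_four_block) auto
  also have "Sa * Sb - Sa * s' * mat11 (uinv p) * (r * Sb) =
      Sa * (1\<^sub>m k - s' * mat11 (uinv p) * r) * Sb"
    using c cS by (simp add: mult_minus_distrib_dim minus_mult_distrib_dim mult_mat_assoc_dim)
  finally show ?thesis by (simp only: Sa_def Sb_def)
qed

lemma Drep_one_plus_mult_first_pivot:
  assumes "B \<in> carrier_mat (Suc n) m" and "A \<in> carrier_mat m (Suc n)"
  defines "t \<equiv> (first_row B * first_col A) $$ (0, 0)"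
  shows "Drep (1\<^sub>m (Suc n) + B * A) = (1 + t) * Drep (1\<^sub>m n + other_rows B *
    ((1\<^sub>m m - first_col A * mat11 (uinv (1 + t)) * first_row B) * other_cols A))"
proof -
  let ?c = "uinv (1 + t)"
  have "1\<^sub>m (Suc n) + B * A = four_block_mat (mat11 (1 + t)) (first_row B * other_cols A)
      (other_rows B * first_col A) (1\<^sub>m n + other_rows B * other_cols A)"
    using assms by (intro eq_matI) (auto simp: index_mult_mat_sum)
  then have "Drep (1\<^sub>m (Suc n) + B * A) = (1 + t) * Drep (1\<^sub>m n + other_rows B * other_cols A -
      other_rows B * first_col A * mat11 ?c * (first_row B * other_cols A))"
    using assms by (simp only:) (intro Drep_four_block; auto)
  also have "1\<^sub>m n + other_rows B * other_cols A -
      other_rows B * first_col A * mat11 ?c * (first_row B * other_cols A) =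
      1\<^sub>m n + other_rows B * ((1\<^sub>m m - first_col A * mat11 ?c * first_row B) * other_cols A)"
  proof -
    have "other_rows B * ((1\<^sub>m m - first_col A * mat11 ?c * first_row B) * other_cols A) =
        other_rows B * other_cols A -
        other_rows B * first_col A * mat11 ?c * (first_row B * other_cols A)"
      using assms by (simp add: mult_minus_distrib_dim minus_mult_distrib_dim mult_mat_assoc_dim)
    then show ?thesis using assms by (intro eq_matI) auto
  qed
  finally show ?thesis .
qed

section \<open>Homomorphisms whose kernel lies in the Jacobson radical\<close>

locale radical_hom = ring_hom eps for eps :: "'b::ring_1 \<Rightarrow> 'a::ring_1" +
  assumes unit_if_eps_eq_1: "eps x = 1 \<Longrightarrow> \<exists>y. x * y = 1 \<and> y * x = 1"
begin

declare hom_distribs [simp]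

lemma mult_uinv_if_eps_eq_1: "eps x = 1 \<Longrightarrow> x * uinv x = 1"
  and uinv_mult_if_eps_eq_1: "eps x = 1 \<Longrightarrow> uinv x * x = 1"
  using unit_if_eps_eq_1[of x] uinv_eqI[of x] by auto

lemma uinv_mult_cancel_left: "eps x = 1 \<Longrightarrow> uinv x * (x * y) = y"
  and mult_uinv_cancel_left: "eps x = 1 \<Longrightarrow> x * (uinv x * y) = y"
  by (simp_all add: uinv_mult_if_eps_eq_1 mult_uinv_if_eps_eq_1 flip: mult.assoc)

lemma eps_uinv: "eps x = 1 \<Longrightarrow> eps (uinv x) = 1"
  using hom_mult[of x "uinv x"] by (simp add: mult_uinv_if_eps_eq_1)

lemma uinv_mult: "eps x = 1 \<Longrightarrow> eps y = 1 \<Longrightarrow> uinv (x * y) = uinv y * uinv x"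
  by (rule uinv_eqI) (simp_all add: mult.assoc mult_uinv_cancel_left uinv_mult_cancel_left
      mult_uinv_if_eps_eq_1 uinv_mult_if_eps_eq_1)

lemma uinv_uinv: "eps x = 1 \<Longrightarrow> uinv (uinv x) = x"
  by (rule uinv_eqI) (simp_all add: mult_uinv_if_eps_eq_1 uinv_mult_if_eps_eq_1)

lemma eps_C0: "x \<in> C0 eps \<Longrightarrow> eps x = 1"
  by (induction rule: C0.induct) (simp_all add: eps_uinv)

lemma C0_generator_sym:
  assumes "eps a = 0 \<or> eps b = 0"
  shows "(1 + a * b) * uinv (1 + b * a) \<in> C0 eps"
  using assms
proof
  assume "eps a = 0"
  then show ?thesis by (rule C0.gen)
next
  assume "eps b = 0"
  then have "uinv ((1 + b * a) * uinv (1 + a * b)) \<in> C0 eps" by (intro C0.inv C0.gen)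
  with \<open>eps b = 0\<close> show ?thesis by (simp add: uinv_mult eps_uinv uinv_uinv)
qed

text \<open>The commutator is the generator for a = (x - 1) y^-1 and b = y.\<close>

lemma commutator_in_C0:
  assumes "eps x = 1" and "eps y = 1"
  shows "x * y * uinv x * uinv y \<in> C0 eps"
proof -
  define a where "a = (x - 1) * uinv y"
  have y: "y * uinv y = 1" "uinv y * y = 1"
    using assms(2) by (simp_all add: mult_uinv_if_eps_eq_1 uinv_mult_if_eps_eq_1)
  have "1 + a * y = x" using y by (simp add: a_def algebra_simps mult.assoc)
  moreover have "uinv (1 + y * a) = y * uinv x * uinv y"
  proof -
    have "1 + y * a = y * x * uinv y" using y by (simp add: a_def algebra_simps mult.assoc)
    then show ?thesis using assms by (simp add: uinv_mult eps_uinv uinv_uinv mult.assoc)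
  qed
  moreover have "eps a = 0" using assms by (simp add: a_def)
  ultimately show ?thesis using C0.gen[of eps a y] by (simp add: mult.assoc)
qed

text \<open>Equality of classes in eps^-1(1)/C0. Including the side conditions makes the relation
  transitive without hypotheses, so that it can be chained with also/finally.\<close>

definition C0_equiv :: "'b \<Rightarrow> 'b \<Rightarrow> bool" (infix \<open>\<sim>\<close> 50) where
  "x \<sim> y \<longleftrightarrow> eps x = 1 \<and> eps y = 1 \<and> eqC0 eps x y"

lemma C0_equiv_refl: "eps x = 1 \<Longrightarrow> x \<sim> x"
  by (simp add: C0_equiv_def eqC0_def mult_uinv_if_eps_eq_1 C0.one)

lemma C0_equiv_trans [trans]: "x \<sim> y \<Longrightarrow> y \<sim> z \<Longrightarrow> x \<sim> z"
  using C0.mult[of "x * uinv y" eps "y * uinv z"]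
  by (simp add: C0_equiv_def eqC0_def mult.assoc uinv_mult_cancel_left)

lemma C0_equiv_C0_mult: "c \<in> C0 eps \<Longrightarrow> eps x = 1 \<Longrightarrow> c * x \<sim> x"
  by (simp add: C0_equiv_def eqC0_def eps_C0 mult.assoc mult_uinv_if_eps_eq_1)

lemma C0_equiv_commute: "eps x = 1 \<Longrightarrow> eps y = 1 \<Longrightarrow> x * y \<sim> y * x"
  using commutator_in_C0 by (simp add: C0_equiv_def eqC0_def uinv_mult mult.assoc)

lemma C0_equiv_mult_right:
  assumes "y \<sim> y'" and "eps x = 1"
  shows "y * x \<sim> y' * x"
proof -
  have "y * x * uinv (y' * x) = y * uinv y'"
    using assms by (simp add: C0_equiv_def uinv_mult mult.assoc mult_uinv_cancel_left)
  then show ?thesis using assms by (simp add: C0_equiv_def eqC0_def)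
qed

lemma C0_equiv_mult:
  assumes "x \<sim> x'" and "y \<sim> y'"
  shows "x * y \<sim> x' * y'"
proof -
  have e: "eps x' = 1" "eps y = 1" "eps y' = 1"
    using assms by (simp_all add: C0_equiv_def)
  have "x * y \<sim> x' * y" using assms(1) e(2) by (rule C0_equiv_mult_right)
  also have "\<dots> \<sim> y * x'" using e by (simp add: C0_equiv_commute)
  also have "\<dots> \<sim> y' * x'" using assms(2) e(1) by (rule C0_equiv_mult_right)
  also have "\<dots> \<sim> x' * y'" using e by (simp add: C0_equiv_commute)
  finally show ?thesis .
qed

lemma C0_equiv_mult_left: "y \<sim> y' \<Longrightarrow> eps x = 1 \<Longrightarrow> x * y \<sim> x * y'"
  using C0_equiv_mult C0_equiv_refl by blast

lemma C0_equiv_pivot_correction: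
  assumes "eps a = 1" "eps b = 1" "eps x = 1" "eps y = 1" and "eps t = 0"
  shows "(a * b + t) * (x * (1 - uinv (a * b + t) * t) * y) \<sim> a * x * (b * y)"
proof -
  define p where "p = a * b + t"
  have eps_p: "eps p = 1" using assms by (simp add: p_def)
  have "p * (x * (1 - uinv p * t) * y) \<sim> p * ((1 - uinv p * t) * x * y)"
    using assms eps_p
    by (intro C0_equiv_mult_left C0_equiv_mult_right C0_equiv_commute) (auto simp: eps_uinv)
  also have "\<dots> = a * (b * x) * y"
  proof -
    have "p * (1 - uinv p * t) = p - t"
      using eps_p by (simp add: right_diff_distrib mult_uinv_cancel_left)
    then have "p * (1 - uinv p * t) = a * b" by (simp add: p_def)
    then show ?thesis by (simp only: mult.assoc[symmetric])
  qed
  also have "\<dots> \<sim> a * (x * b) * y"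
    using assms by (intro C0_equiv_mult_right C0_equiv_mult_left C0_equiv_commute) auto
  also have "a * (x * b) * y = a * x * (b * y)" by (simp add: mult.assoc)
  finally show ?thesis unfolding p_def .
qed

lemma map_mat_mult:
  "dim_col A = dim_row B \<Longrightarrow> map_mat eps (A * B) = map_mat eps A * map_mat eps B"
  by (rule mat_hom_mult[of _ "dim_row A" "dim_col A" _ "dim_col B"]) (auto intro: carrier_matI)

lemma map_mat_mult_eq_zero:
  assumes "X \<in> carrier_mat k p" and "Y \<in> carrier_mat p q"
    and "map_mat eps X = 0\<^sub>m k p \<or> map_mat eps Y = 0\<^sub>m p q"
  shows "map_mat eps (X * Y) = 0\<^sub>m k q"
  using assms map_mat_mult[of X Y] by auto

lemma map_mat_one_plus_mult:
  assumes "X \<in> carrier_mat k p" and "Y \<in> carrier_mat p k"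
    and "map_mat eps X = 0\<^sub>m k p \<or> map_mat eps Y = 0\<^sub>m p k"
  shows "map_mat eps (1\<^sub>m k + X * Y) = 1\<^sub>m k"
proof -
  have "map_mat eps (X * Y) = 0\<^sub>m k k" using assms by (rule map_mat_mult_eq_zero)
  with assms(1,2) show ?thesis by (intro eq_matI) (auto simp: map_mat_eq_zero_iff)
qed

lemma map_mat_schur_eq_one:
  assumes "r \<in> carrier_mat 1 k" "s \<in> carrier_mat k 1" "A \<in> carrier_mat k k"
    and "map_mat eps s = 0\<^sub>m k 1" and "map_mat eps A = 1\<^sub>m k"
  shows "map_mat eps (A - s * mat11 c * r) = 1\<^sub>m k"
  using assms by (intro eq_matI) (auto simp: map_mat_eq_zero_iff map_mat_eq_one_iff)

lemma four_block_mat_split_eps_one: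
  assumes "g \<in> carrier_mat (Suc k) (Suc k)" and "map_mat eps g = 1\<^sub>m (Suc k)"
  obtains a r s A where "r \<in> carrier_mat 1 k" "s \<in> carrier_mat k 1" "A \<in> carrier_mat k k"
    and "g = four_block_mat (mat11 a) r s A"
    and "eps a = 1" "map_mat eps r = 0\<^sub>m 1 k" "map_mat eps s = 0\<^sub>m k 1" "map_mat eps A = 1\<^sub>m k"
proof -
  obtain a r s A where c: "r \<in> carrier_mat 1 k" "s \<in> carrier_mat k 1" "A \<in> carrier_mat k k"
    and g: "g = four_block_mat (mat11 a) r s A"
    using four_block_mat_split[OF assms(1)] .
  have e: "eps (four_block_mat (mat11 a) r s A $$ (i, j)) = (if i = j then 1 else 0)"
    if "i < Suc k" "j < Suc k" for i j
    using assms that by (simp add: map_mat_eq_one_iff flip: g)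
  show thesis
  proof (rule that[OF c g])
    show "eps a = 1" using e[of 0 0] by simp
    show "map_mat eps r = 0\<^sub>m 1 k"
      using c e[of 0 "Suc j" for j] by (auto simp: map_mat_eq_zero_iff)
    show "map_mat eps s = 0\<^sub>m k 1"
      using c e[of "Suc i" 0 for i] by (auto simp: map_mat_eq_zero_iff)
    show "map_mat eps A = 1\<^sub>m k"
      using c e[of "Suc i" "Suc j" for i j] by (auto simp: map_mat_eq_one_iff)
  qed
qed

lemma eps_Drep:
  assumes "g \<in> carrier_mat n n" and "map_mat eps g = 1\<^sub>m n"
  shows "eps (Drep g) = 1"
  using assms
proof (induction n arbitrary: g)
  case 0
  then show ?case by (simp add: Drep_empty)
next
  case (Suc k)
  obtain a r s A where c: "r \<in> carrier_mat 1 k" "s \<in> carrier_mat k 1" "A \<in> carrier_mat k k"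
    and g: "g = four_block_mat (mat11 a) r s A"
    and e: "eps a = 1" "map_mat eps r = 0\<^sub>m 1 k" "map_mat eps s = 0\<^sub>m k 1" "map_mat eps A = 1\<^sub>m k"
    using four_block_mat_split_eps_one[OF Suc.prems] .
  have "eps (Drep (A - s * mat11 (uinv a) * r)) = 1"
    using c e by (intro Suc.IH map_mat_schur_eq_one) auto
  then show ?case using c e by (simp add: g Drep_four_block)
qed

lemma Drep_one_plus_rank_one:
  assumes "l \<in> carrier_mat k 1" and "u \<in> carrier_mat 1 k"
    and "map_mat eps l = 0\<^sub>m k 1 \<or> map_mat eps u = 0\<^sub>m 1 k"
  shows "Drep (1\<^sub>m k + l * u) \<sim> 1 + (u * l) $$ (0, 0)"
  using assms
proof (induction k arbitrary: l u)
  case 0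
  then have "(u * l) $$ (0, 0) = 0" by (simp add: index_mult_mat_sum)
  with 0 show ?case by (simp add: Drep_empty C0_equiv_refl)
next
  case (Suc k)
  define l0 u0 where "l0 = l $$ (0, 0)" and "u0 = u $$ (0, 0)"
  define t where "t = (other_cols u * other_rows l) $$ (0, 0)"
  define w where "w = uinv (1 + u0 * l0)"
  have c: "other_rows l \<in> carrier_mat k 1" "other_cols u \<in> carrier_mat 1 k"
    using Suc.prems by auto
  have vanish: "eps l0 = 0 \<and> map_mat eps (other_rows l) = 0\<^sub>m k 1 \<or>
      eps u0 = 0 \<and> map_mat eps (other_cols u) = 0\<^sub>m 1 k"
    using Suc.prems by (auto simp: map_mat_eq_zero_iff l0_def u0_def)
  then have eps_t: "eps t = 0"
    using map_mat_mult_eq_zero[OF c(2,1)] c by (auto simp: t_def map_mat_eq_zero_iff)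
  have eps_lu: "eps (1 + l0 * u0) = 1" "eps (1 + u0 * l0) = 1" using vanish by auto
  have "Drep (1\<^sub>m (Suc k) + l * u) =
      (1 + l0 * u0) * Drep (1\<^sub>m k + other_rows l * (mat11 w * other_cols u))"
  proof -
    have "w = 1 - u0 * uinv (1 + l0 * u0) * l0"
      unfolding w_def
      by (intro uinv_one_plus_swap mult_uinv_if_eps_eq_1 uinv_mult_if_eps_eq_1 eps_lu(1))
    then have "1\<^sub>m 1 - first_col u * mat11 (uinv (1 + l0 * u0)) * first_row l = mat11 w"
      using Suc.prems by (intro eq_matI) (auto simp: l0_def u0_def)
    moreover have "(first_row l * first_col u) $$ (0, 0) = l0 * u0"
      using Suc.prems by (simp add: l0_def u0_def)
    ultimately show ?thesis using Drep_one_plus_mult_first_pivot[OF Suc.prems(1,2)] by simp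
  qed
  also have "\<dots> \<sim> (1 + l0 * u0) * (1 + w * t)"
  proof (rule C0_equiv_mult_left[OF _ eps_lu(1)])
    have "(mat11 w * other_cols u * other_rows l) $$ (0, 0) = w * t"
      using Suc.prems by (simp add: mult_mat_assoc_dim t_def)
    moreover have
      "map_mat eps (other_rows l) = 0\<^sub>m k 1 \<or> map_mat eps (mat11 w * other_cols u) = 0\<^sub>m 1 k"
      using vanish c map_mat_mult_eq_zero[of "mat11 w" 1 1 "other_cols u" k] by auto
    ultimately show "Drep (1\<^sub>m k + other_rows l * (mat11 w * other_cols u)) \<sim> 1 + w * t"
      using Suc.IH[of "other_rows l" "mat11 w * other_cols u"] c by simp
  qed
  also have "(1 + l0 * u0) * (1 + w * t) = ((1 + l0 * u0) * w) * (1 + (u0 * l0 + t))"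
  proof -
    have "w * (1 + (u0 * l0 + t)) = w * (1 + u0 * l0) + w * t" by (simp add: algebra_simps)
    also have "w * (1 + u0 * l0) = 1"
      unfolding w_def using eps_lu(2) by (rule uinv_mult_if_eps_eq_1)
    finally show ?thesis by (simp only: mult.assoc)
  qed
  also have "\<dots> \<sim> 1 + (u0 * l0 + t)"
    using eps_t eps_lu vanish by (intro C0_equiv_C0_mult) (auto simp: w_def C0_generator_sym)
  also have "u0 * l0 + t = (u * l) $$ (0, 0)"
    using Suc.prems c mult_split_first_col[of u k l] by (simp add: t_def l0_def u0_def)
  finally show ?case .
qed

lemma Drep_mult:
  assumes "\<alpha> \<in> carrier_mat n n" and "\<beta> \<in> carrier_mat n n"
    and "map_mat eps \<alpha> = 1\<^sub>m n" and "map_mat eps \<beta> = 1\<^sub>m n"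
  shows "Drep (\<alpha> * \<beta>) \<sim> Drep \<alpha> * Drep \<beta>"
  using assms
proof (induction n arbitrary: \<alpha> \<beta>)
  case 0
  then show ?case by (simp add: Drep_empty C0_equiv_refl)
next
  case (Suc k)
  obtain a r s A where c\<alpha>: "r \<in> carrier_mat 1 k" "s \<in> carrier_mat k 1" "A \<in> carrier_mat k k"
    and \<alpha>: "\<alpha> = four_block_mat (mat11 a) r s A"
    and e\<alpha>: "eps a = 1" "map_mat eps r = 0\<^sub>m 1 k" "map_mat eps s = 0\<^sub>m k 1" "map_mat eps A = 1\<^sub>m k"
    using four_block_mat_split_eps_one[OF Suc.prems(1,3)] .
  obtain b r' s' B where c\<beta>: "r' \<in> carrier_mat 1 k" "s' \<in> carrier_mat k 1" "B \<in> carrier_mat k k"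
    and \<beta>: "\<beta> = four_block_mat (mat11 b) r' s' B"
    and e\<beta>: "eps b = 1" "map_mat eps r' = 0\<^sub>m 1 k" "map_mat eps s' = 0\<^sub>m k 1"
      "map_mat eps B = 1\<^sub>m k"
    using four_block_mat_split_eps_one[OF Suc.prems(2,4)] .
  define Sa Sb where "Sa = A - s * mat11 (uinv a) * r" and "Sb = B - s' * mat11 (uinv b) * r'"
  define t where "t = (r * s') $$ (0, 0)"
  define p where "p = a * b + t"
  define M where "M = 1\<^sub>m k - s' * mat11 (uinv p) * r"
  have c: "Sa \<in> carrier_mat k k" "Sb \<in> carrier_mat k k" "M \<in> carrier_mat k k"
    using c\<alpha> c\<beta> by (auto simp: Sa_def Sb_def M_def)
  have eS: "map_mat eps Sa = 1\<^sub>m k" "map_mat eps Sb = 1\<^sub>m k"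
    unfolding Sa_def Sb_def using c\<alpha> c\<beta> e\<alpha> e\<beta> by (blast intro: map_mat_schur_eq_one)+
  then have eD: "eps (Drep Sa) = 1" "eps (Drep Sb) = 1" using c by (simp_all add: eps_Drep)
  have "map_mat eps (r * s') = 0\<^sub>m 1 1" using c\<alpha> c\<beta> e\<beta> by (intro map_mat_mult_eq_zero) auto
  then have eps_t: "eps t = 0" using c\<alpha> c\<beta> by (auto simp: t_def map_mat_eq_zero_iff)
  have eps_p: "eps p = 1" using e\<alpha> e\<beta> eps_t by (simp add: p_def)
  have units: "uinv a * a = 1" "b * uinv b = 1" "p * uinv p = 1" "uinv p * p = 1"
    using e\<alpha>(1) e\<beta>(1) eps_p by (simp_all add: uinv_mult_if_eps_eq_1 mult_uinv_if_eps_eq_1)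
  have "Drep (\<alpha> * \<beta>) = p * Drep (Sa * M * Sb)"
    unfolding \<alpha> \<beta> Sa_def Sb_def M_def p_def t_def
    using Drep_four_block_mult[OF c\<alpha> c\<beta> units[unfolded p_def t_def]] .
  also have "\<dots> \<sim> p * (Drep Sa * (1 - uinv p * t) * Drep Sb)"
  proof (rule C0_equiv_mult_left[OF _ eps_p])
    have M: "M = 1\<^sub>m k + s' * (mat11 (- uinv p) * r)"
      using c\<alpha> c\<beta> by (intro eq_matI) (auto simp: M_def)
    have "Drep M \<sim> 1 + (mat11 (- uinv p) * r * s') $$ (0, 0)"
      unfolding M using c\<alpha> c\<beta> e\<beta> by (intro Drep_one_plus_rank_one) auto
    also have "(mat11 (- uinv p) * r * s') $$ (0, 0) = - uinv p * t"
      using c\<alpha> c\<beta> by (simp add: mult_mat_assoc_dim t_def)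
    finally have DM: "Drep M \<sim> 1 - uinv p * t" by simp
    have eM: "map_mat eps M = 1\<^sub>m k"
      unfolding M using c\<alpha> c\<beta> e\<beta> by (intro map_mat_one_plus_mult) auto
    then have "map_mat eps (Sa * M) = 1\<^sub>m k" using c eS by (simp add: map_mat_mult)
    then have "Drep (Sa * M * Sb) \<sim> Drep (Sa * M) * Drep Sb"
      using c eS by (intro Suc.IH) auto
    also have "\<dots> \<sim> Drep Sa * Drep M * Drep Sb"
      using c eS eM eD by (intro C0_equiv_mult_right Suc.IH) auto
    also have "\<dots> \<sim> Drep Sa * (1 - uinv p * t) * Drep Sb"
      using DM eD by (intro C0_equiv_mult_right C0_equiv_mult_left)
    finally show "Drep (Sa * M * Sb) \<sim> Drep Sa * (1 - uinv p * t) * Drep Sb" .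
  qed
  also have "\<dots> \<sim> a * Drep Sa * (b * Drep Sb)"
    unfolding p_def using e\<alpha>(1) e\<beta>(1) eD eps_t by (rule C0_equiv_pivot_correction)
  also have "\<dots> = Drep \<alpha> * Drep \<beta>"
    unfolding \<alpha> \<beta> Sa_def Sb_def using c\<alpha> c\<beta> by (simp add: Drep_four_block)
  finally show ?case .
qed

lemma Drep_one_plus_mult_swap:
  assumes "\<alpha> \<in> carrier_mat m n" and "\<beta> \<in> carrier_mat n m"
    and "map_mat eps \<alpha> = 0\<^sub>m m n \<or> map_mat eps \<beta> = 0\<^sub>m n m"
  shows "Drep (1\<^sub>m m + \<alpha> * \<beta>) \<sim> Drep (1\<^sub>m n + \<beta> * \<alpha>)"
  using assms
proof (induction n arbitrary: \<alpha> \<beta>)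
  case 0
  then have "1\<^sub>m m + \<alpha> * \<beta> = 1\<^sub>m m" by (intro eq_matI) (auto simp: index_mult_mat_sum)
  with 0 show ?case by (simp add: Drep_empty C0_equiv_refl)
next
  case (Suc n)
  define t where "t = (first_row \<beta> * first_col \<alpha>) $$ (0, 0)"
  define T where "T = 1\<^sub>m m - first_col \<alpha> * mat11 (uinv (1 + t)) * first_row \<beta>"
  have c: "first_col \<alpha> \<in> carrier_mat m 1" "other_cols \<alpha> \<in> carrier_mat m n"
    "first_row \<beta> \<in> carrier_mat 1 m" "other_rows \<beta> \<in> carrier_mat n m" "T \<in> carrier_mat m m"
    using Suc.prems by (auto simp: T_def)
  have vanish: "map_mat eps (first_col \<alpha>) = 0\<^sub>m m 1 \<and> map_mat eps (other_cols \<alpha>) = 0\<^sub>m m n \<or>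
      map_mat eps (first_row \<beta>) = 0\<^sub>m 1 m \<and> map_mat eps (other_rows \<beta>) = 0\<^sub>m n m"
    using Suc.prems by (auto simp: map_mat_eq_zero_iff)
  then have "map_mat eps (first_row \<beta> * first_col \<alpha>) = 0\<^sub>m 1 1"
    using c by (intro map_mat_mult_eq_zero) auto
  then have eps_t: "eps t = 0" using c by (auto simp: t_def map_mat_eq_zero_iff)
  have vanish': "map_mat eps (T * other_cols \<alpha>) = 0\<^sub>m m n \<or> map_mat eps (other_rows \<beta>) = 0\<^sub>m n m"
    using c vanish map_mat_mult_eq_zero[of T m m "other_cols \<alpha>" n] by auto
  have "(1 + t) * uinv (1 + t) = 1" using eps_t by (intro mult_uinv_if_eps_eq_1) simp
  then have "1\<^sub>m m + \<alpha> * \<beta> =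
      (1\<^sub>m m + first_col \<alpha> * first_row \<beta>) * (1\<^sub>m m + T * other_cols \<alpha> * other_rows \<beta>)"
    unfolding T_def t_def using Suc.prems(1,2) by (intro one_plus_mult_factor)
  also have "Drep \<dots> \<sim>
      Drep (1\<^sub>m m + first_col \<alpha> * first_row \<beta>) * Drep (1\<^sub>m m + T * other_cols \<alpha> * other_rows \<beta>)"
  proof (rule Drep_mult)
    show "map_mat eps (1\<^sub>m m + first_col \<alpha> * first_row \<beta>) = 1\<^sub>m m"
      using c vanish by (intro map_mat_one_plus_mult[of _ m 1]) auto
    show "map_mat eps (1\<^sub>m m + T * other_cols \<alpha> * other_rows \<beta>) = 1\<^sub>m m"
      using c vanish' by (intro map_mat_one_plus_mult[of _ m n]) auto
  qed (use c in auto)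
  also have "\<dots> \<sim> (1 + t) * Drep (1\<^sub>m n + other_rows \<beta> * (T * other_cols \<alpha>))"
  proof (rule C0_equiv_mult)
    show "Drep (1\<^sub>m m + first_col \<alpha> * first_row \<beta>) \<sim> 1 + t"
      unfolding t_def using c vanish by (intro Drep_one_plus_rank_one) auto
    show "Drep (1\<^sub>m m + T * other_cols \<alpha> * other_rows \<beta>) \<sim>
        Drep (1\<^sub>m n + other_rows \<beta> * (T * other_cols \<alpha>))"
      using c vanish' by (intro Suc.IH) auto
  qed
  also have "(1 + t) * Drep (1\<^sub>m n + other_rows \<beta> * (T * other_cols \<alpha>)) =
      Drep (1\<^sub>m (Suc n) + \<beta> * \<alpha>)"
    unfolding T_def t_def using Suc.prems(2,1) by (rule Drep_one_plus_mult_first_pivot[symmetric])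
  finally show ?case .
qed

end

lemma local_augmentation_radical_hom:
  fixes eps :: "'b::ring_1 \<Rightarrow> 'a::ring_1"
  assumes "local_augmentation eps j"
  shows "radical_hom eps"
proof
  show "eps (x + y) = eps x + eps y" "eps (x * y) = eps x * eps y" "eps 1 = 1" for x y
    using assms by (simp_all add: local_augmentation_def is_ring_hom_def)
  then show "eps 0 = 0" by (metis add_cancel_right_right)
next
  fix x assume "eps x = 1"
  have "invertible_mat (1\<^sub>m 1 :: 'a mat)"
    unfolding invertible_mat_def inverts_mat_def by (auto intro!: exI[of _ "1\<^sub>m 1"])
  moreover have "map_mat eps (mat11 x) = 1\<^sub>m 1" using \<open>eps x = 1\<close> by (auto intro!: eq_matI)
  moreover have "mat11 x \<in> carrier_mat 1 1" by simp
  ultimately have "invertible_mat (mat11 x)"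
    using assms unfolding local_augmentation_def by simp
  then obtain M where XM: "mat11 x * M = 1\<^sub>m 1" and MX: "M * mat11 x = 1\<^sub>m (dim_row M)"
    unfolding invertible_mat_def inverts_mat_def by auto
  have "dim_col M = 1" using arg_cong[OF XM, of dim_col] by simp
  moreover have "dim_row M = 1" using arg_cong[OF MX, of dim_col] by simp
  ultimately have "x * M $$ (0, 0) = 1" "M $$ (0, 0) * x = 1"
    using arg_cong[OF XM, of "\<lambda>N. N $$ (0, 0)"] arg_cong[OF MX, of "\<lambda>N. N $$ (0, 0)"] by simp_all
  then show "\<exists>y. x * y = 1 \<and> y * x = 1" by blast
qed

theorem proposition4p5:
  fixes eps :: "'b::ring_1 \<Rightarrow> 'a::ring_1" and j :: "'a \<Rightarrow> 'b"
  assumes "local_augmentation eps j"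
  shows "(\<forall>n (\<alpha> :: 'b mat) \<beta>. \<alpha> \<in> carrier_mat n n \<longrightarrow> \<beta> \<in> carrier_mat n n \<longrightarrow>
            invertible_mat \<alpha> \<longrightarrow> invertible_mat \<beta> \<longrightarrow>
            map_mat eps \<alpha> = 1\<^sub>m n \<longrightarrow> map_mat eps \<beta> = 1\<^sub>m n \<longrightarrow>
            eqC0 eps (Drep (\<alpha> * \<beta>)) (Drep \<alpha> * Drep \<beta>))
       \<and> (\<forall>m n (\<alpha> :: 'b mat) \<beta>. \<alpha> \<in> carrier_mat m n \<longrightarrow> \<beta> \<in> carrier_mat n m \<longrightarrow>
            (map_mat eps \<alpha> = 0\<^sub>m m n \<or> map_mat eps \<beta> = 0\<^sub>m n m) \<longrightarrow>
            eqC0 eps (Drep (1\<^sub>m m + \<alpha> * \<beta>)) (Drep (1\<^sub>m n + \<beta> * \<alpha>)))"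
proof -
  interpret radical_hom eps using assms by (rule local_augmentation_radical_hom)
  show ?thesis using Drep_mult Drep_one_plus_mult_swap by (auto simp: C0_equiv_def)
qed

end
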